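(* Let $(X,Z)\in\mathbb{R}^{n}\times\mathbb{R}^{n\times p}$ be any fixed design matrix and consider the linear model $Y=X\beta+Z\theta+\epsilon$, where the noise vector $\epsilon\in\mathbb{R}^n$ is exchangeable. Let $T(\cdot,\cdot;X,Z,\epsilon)$ be a function of a pair of $n\times n$ permutation matrices that satisfies the transferability condition: for all $P_{\pi_i},P_{\pi_j},P_\sigma\in\mathcal{S}_n$, $$T(P_{\pi_i},P_{\pi_j};X,Z,P_\sigma\epsilon)=T(P_\sigma^{-1}P_{\pi_i},P_\sigma^{-1}P_{\pi_j};X,Z,\epsilon).$$ Let $\mathcal{R}=\mathcal{R}(X,Z)\subseteq[n]$ be any row set (possibly depending on the design). Draw $P_{\pi_1\mid\mathcal{R}},\dots,P_{\pi_B\mid\mathcal{R}}$ uniformly at random from $\mathcal{S}_{n\mid\mathcal{R}}$, set $T_{i,0}=T(P_{\pi_i\mid\mathcal{R}},I_n;X,Z,\epsilon)$ and $T_{0,i}=T(I_n,P_{\pi_i\mid\mathcal{R}};X,Z,\epsilon)$, and define $$p_{\text{val}}=\frac{1}{B+1}\Big[1+\sum_{i=1}^B\mathbb{I}(T_{i,0}>T_{0,i})+\tfrac12\mathbb{I}(T_{i,0}=T_{0,i})\Big].$$ Then under the null hypothesis $\mathcal{H}_0:\beta=0$, $pr(p_{\text{val}}\le\alpha\mid\mathcal{H}_0)<2\alpha$ for all $\alpha>0$.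
   Context: $[n]=\{1,\dots,n\}$. $\mathcal{S}_n$ denotes the group of all $n\times n$ permutation matrices; a permutation $\pi$ of $[n]$ corresponds to $P_\pi=(p_{ij})$ with $p_{ij}=1$ iff $\pi(i)=j$. For $\mathcal{R}\subseteq[n]$, $\mathcal{S}_{n\mid\mathcal{R}}$ is the subgroup of permutation matrices $P_{\pi\mid\mathcal{R}}$ with $p_{ii}=1$ for all $i\in\mathcal{R}$ (i.e. permutations fixing every row in $\mathcal{R}$). A noise vector $\epsilon$ is exchangeable if $P\epsilon$ has the same distribution as $\epsilon$ for every $P\in\mathcal{S}_n$. $\mathbb{I}$ is the indicator function. *)

theory Defs
  imports "HOL-Probability.Probability"
begin

definition perm_mat :: "('n::finite \<Rightarrow> 'n) \<Rightarrow> real^'n^'n" where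
  "perm_mat \<pi> = (\<chi> i j. if \<pi> i = j then 1 else 0)"

definition perm_mats :: "(real^'n::finite^'n) set" where
  "perm_mats = {perm_mat \<pi> | \<pi>. \<pi> permutes (UNIV :: 'n set)}"

definition perm_mats_fix :: "'n::finite set \<Rightarrow> (real^'n^'n) set" where
  "perm_mats_fix R = {P \<in> perm_mats. \<forall>i\<in>R. P $ i $ i = 1}"

definition exchangeable :: "'a measure \<Rightarrow> ('a \<Rightarrow> real^'n::finite) \<Rightarrow> bool" where
  "exchangeable M \<epsilon> \<longleftrightarrow>
     (\<forall>P\<in>perm_mats. distr M borel (\<lambda>\<omega>. P *v \<epsilon> \<omega>) = distr M borel \<epsilon>)"

text \<open>The p-value, for a statistic t of a pair of permutation matrices (with the
  data X, Z, eps already plugged in) and drawn matrices Ps 1, ..., Ps B.\<close>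
definition pval :: "(real^'n::finite^'n \<Rightarrow> real^'n^'n \<Rightarrow> real) \<Rightarrow> nat \<Rightarrow> (nat \<Rightarrow> real^'n^'n) \<Rightarrow> real" where
  "pval t B Ps = (1 + (\<Sum>i=1..B. of_bool (t (Ps i) (mat 1) > t (mat 1) (Ps i))
                     + of_bool (t (Ps i) (mat 1) = t (mat 1) (Ps i)) / 2)) / real (B + 1)"

end

theory Submission
  imports Defs
begin

text \<open>
  Exchangeability makes the law of \<epsilon> invariant under every Q of the group S_{n|R}, so the
  rejection probability may be averaged over Q. By transferability, the statistic at Q \<epsilon>
  against the draws P_1, ..., P_B is the statistic at \<epsilon> on the B + 1 matrices
  Q^-1, Q^-1 P_1, ..., Q^-1 P_B, and as Q and the P_i range over the group these run through every
  (B + 1)-tuple exactly once; so the identity position is exchangeable with the B draws.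
  The p-value is at most \<alpha> exactly when position 0 loses at most \<alpha>(B + 1) - 1 of its B
  comparisons (a tie counting as half a loss). In a round robin of B + 1 players at most
  2\<alpha>(B + 1) - 1 players can do that, since m such players already lose m(m - 1)/2 games among
  themselves. Averaging over the positions bounds the rejection probability by
  max 0 (2\<alpha>(B + 1) - 1) / (B + 1) < 2\<alpha>.
\<close>

lemma perm_mat_mult: "perm_mat \<sigma> ** perm_mat \<pi> = perm_mat (\<pi> \<circ> \<sigma>)"
  unfolding perm_mat_def matrix_matrix_mult_def
  by (simp add: vec_eq_iff if_distrib[of "\<lambda>x. x * _"] cong: if_cong)

lemma perm_mat_id: "perm_mat id = mat 1"
  unfolding perm_mat_def mat_def by (simp add: vec_eq_iff)

lemma perm_mat_diag_eq_1_iff: "perm_mat \<pi> $ i $ i = 1 \<longleftrightarrow> \<pi> i = i"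
  unfolding perm_mat_def by simp

lemma matrix_inv_perm_mat:
  assumes "\<pi> permutes (UNIV :: 'n::finite set)"
  shows "matrix_inv (perm_mat \<pi> :: real^'n^'n) = perm_mat (inv \<pi>)"
proof -
  have left: "perm_mat (inv \<pi>) ** perm_mat \<pi> = (mat 1 :: real^'n^'n)"
    and right: "perm_mat \<pi> ** perm_mat (inv \<pi>) = (mat 1 :: real^'n^'n)"
    using assms by (simp_all add: perm_mat_mult permutes_inv_o perm_mat_id)
  have "A = perm_mat (inv \<pi>)" if "A ** perm_mat \<pi> = mat 1" for A :: "real^'n^'n"
  proof -
    have "A = A ** (perm_mat \<pi> ** perm_mat (inv \<pi>))"
      by (simp add: right matrix_mul_rid)
    also have "\<dots> = perm_mat (inv \<pi>)"
      by (simp add: matrix_mul_assoc that matrix_mul_lid)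
    finally show ?thesis .
  qed
  then have "(SOME A. perm_mat \<pi> ** A = mat 1 \<and> A ** perm_mat \<pi> = mat 1) = perm_mat (inv \<pi>)"
    using left right by (blast intro: some_equality)
  then show ?thesis
    unfolding matrix_inv_def .
qed

lemma perm_mats_matrix_inv:
  assumes "P \<in> perm_mats"
  shows "matrix_inv P ** P = mat 1" "P ** matrix_inv P = mat 1" "matrix_inv (matrix_inv P) = P"
  using assms unfolding perm_mats_def
  by (auto simp: matrix_inv_perm_mat matrix_inv_perm_mat[OF permutes_inv] perm_mat_mult permutes_inv_o
      perm_mat_id inv_inv_eq permutes_bij)

lemma finite_perm_mats: "finite (perm_mats :: (real^'n::finite^'n) set)"
proof -
  have "finite {\<pi>. \<pi> permutes (UNIV :: 'n set)}"
    by (simp add: finite_permutations)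
  then show ?thesis
    unfolding perm_mats_def by (simp add: setcompr_eq_image)
qed

definition perm_subgroup :: "(real^'n::finite^'n) set \<Rightarrow> bool" where
  "perm_subgroup G \<longleftrightarrow> G \<subseteq> perm_mats \<and> mat 1 \<in> G \<and>
     (\<forall>P\<in>G. \<forall>Q\<in>G. P ** Q \<in> G) \<and> (\<forall>P\<in>G. matrix_inv P \<in> G)"

lemma perm_mats_fix_iff:
  "P \<in> perm_mats_fix R \<longleftrightarrow> (\<exists>\<pi>. \<pi> permutes UNIV \<and> (\<forall>i\<in>R. \<pi> i = i) \<and> P = perm_mat \<pi>)"
  unfolding perm_mats_fix_def perm_mats_def by (auto simp: perm_mat_diag_eq_1_iff)

lemma perm_subgroup_perm_mats_fix: "perm_subgroup (perm_mats_fix R)"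
  unfolding perm_subgroup_def
proof (intro conjI ballI)
  show "perm_mats_fix R \<subseteq> perm_mats"
    unfolding perm_mats_fix_def by blast
  show "mat 1 \<in> perm_mats_fix R"
    unfolding perm_mats_fix_iff perm_mat_id[symmetric] by (intro exI[of _ id]) (simp add: permutes_id)
next
  fix P Q assume "P \<in> perm_mats_fix R" "Q \<in> perm_mats_fix R"
  then obtain \<sigma> \<pi> where "\<sigma> permutes UNIV" "\<forall>i\<in>R. \<sigma> i = i" "P = perm_mat \<sigma>"
    and "\<pi> permutes UNIV" "\<forall>i\<in>R. \<pi> i = i" "Q = perm_mat \<pi>"
    unfolding perm_mats_fix_iff by blast
  then show "P ** Q \<in> perm_mats_fix R"
    unfolding perm_mats_fix_iff
    by (intro exI[of _ "\<pi> \<circ> \<sigma>"]) (simp add: perm_mat_mult permutes_compose)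
next
  fix P assume "P \<in> perm_mats_fix R"
  then obtain \<pi> where \<pi>: "\<pi> permutes UNIV" "\<forall>i\<in>R. \<pi> i = i" "P = perm_mat \<pi>"
    unfolding perm_mats_fix_iff by blast
  then have "\<forall>i\<in>R. inv \<pi> i = i"
    by (metis permutes_inverses(2))
  with \<pi> show "matrix_inv P \<in> perm_mats_fix R"
    unfolding perm_mats_fix_iff by (auto simp: matrix_inv_perm_mat intro: permutes_inv)
qed

lemma perm_subgroupD:
  assumes "perm_subgroup G"
  shows "finite G" "mat 1 \<in> G" "P \<in> G \<Longrightarrow> Q \<in> G \<Longrightarrow> P ** Q \<in> G"
    "P \<in> G \<Longrightarrow> matrix_inv P \<in> G" "P \<in> G \<Longrightarrow> matrix_inv (matrix_inv P) = P"
    "P \<in> G \<Longrightarrow> matrix_inv P ** (P ** A) = A" "P \<in> G \<Longrightarrow> P ** (matrix_inv P ** A) = A"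
  using assms finite_subset[OF _ finite_perm_mats] perm_mats_matrix_inv[of P]
  unfolding perm_subgroup_def by (auto simp: matrix_mul_assoc matrix_mul_lid)

lemma card_low_losers_tournament_le:
  fixes a :: "'i \<Rightarrow> 'i \<Rightarrow> real"
  assumes "finite I"
    and nonneg: "\<And>i k. i \<in> I \<Longrightarrow> k \<in> I \<Longrightarrow> a i k \<ge> 0"
    and sym: "\<And>i k. i \<in> I \<Longrightarrow> k \<in> I \<Longrightarrow> i \<noteq> k \<Longrightarrow> a i k + a k i = 1"
  shows "real (card {k \<in> I. 1 + (\<Sum>i\<in>I - {k}. a i k) \<le> c}) \<le> max 0 (2 * c - 1)"
proof -
  define K where "K = {k \<in> I. 1 + (\<Sum>i\<in>I - {k}. a i k) \<le> c}"
  define m where "m = real (card K)"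
  have "K \<subseteq> I" "finite K"
    using \<open>finite I\<close> by (auto simp: K_def)
  define S where "S = (\<Sum>k\<in>K. \<Sum>i\<in>K - {k}. a i k)"
  have "S = (\<Sum>k\<in>K. \<Sum>i\<in>K - {k}. a k i)"
    unfolding S_def using \<open>finite K\<close> sum.swap_restrict[of K K "\<lambda>k i. a k i" "\<lambda>k i. i \<noteq> k"]
    by (simp add: set_diff_eq eq_commute)
  then have "2 * S = (\<Sum>k\<in>K. \<Sum>i\<in>K - {k}. a i k + a k i)"
    unfolding S_def by (simp add: sum.distrib)
  also have "\<dots> = (\<Sum>k\<in>K. m - 1)"
  proof (intro sum.cong refl)
    fix k assume "k \<in> K"
    then have "(\<Sum>i\<in>K - {k}. a i k + a k i) = real (card (K - {k}))"
      using \<open>K \<subseteq> I\<close> by (simp add: sym subsetD)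
    also have "\<dots> = m - 1"
      using card.remove[OF \<open>finite K\<close> \<open>k \<in> K\<close>] by (simp add: m_def)
    finally show "(\<Sum>i\<in>K - {k}. a i k + a k i) = m - 1" .
  qed
  finally have games_in_K: "2 * S = m * (m - 1)"
    by (simp add: m_def)
  have "S \<le> (\<Sum>k\<in>K. \<Sum>i\<in>I - {k}. a i k)"
    unfolding S_def using \<open>K \<subseteq> I\<close> \<open>finite I\<close>
    by (intro sum_mono sum_mono2) (auto intro: nonneg)
  also have "\<dots> \<le> (\<Sum>k\<in>K. c - 1)"
    by (intro sum_mono) (simp add: K_def)
  finally have "m * (m - 1) \<le> m * (2 * c - 2)"
    using games_in_K by (simp add: m_def algebra_simps)
  then have "m = 0 \<or> m \<le> 2 * c - 1"
    by (cases "m = 0") (auto simp: m_def mult_le_cancel_left_pos)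
  then show ?thesis
    by (auto simp: K_def m_def)
qed

definition score :: "('g \<Rightarrow> 'g \<Rightarrow> real) \<Rightarrow> 'i set \<Rightarrow> ('i \<Rightarrow> 'g) \<Rightarrow> 'i \<Rightarrow> real" where
  "score w I q k = (\<Sum>i\<in>I - {k}. w (q i) (q k))"

lemma score_comp_permutes:
  assumes "\<sigma> permutes I"
  shows "score w I (q \<circ> \<sigma>) k = score w I q (\<sigma> k)"
proof -
  have "I - {\<sigma> k} = \<sigma> ` (I - {k})"
    using assms by (simp add: image_set_diff permutes_inj permutes_image)
  then show ?thesis
    unfolding score_def by (simp add: sum.reindex permutes_inj_on[OF assms])
qed

lemma PiE_comp_permutes:
  assumes "\<sigma> permutes I" "q \<in> PiE I (\<lambda>_. G)"
  shows "q \<circ> \<sigma> \<in> PiE I (\<lambda>_. G)"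
  using assms by (auto simp: PiE_iff extensional_def permutes_in_image permutes_not_in)

lemma bij_betw_comp_permutes_PiE:
  assumes "\<sigma> permutes I"
  shows "bij_betw (\<lambda>q. q \<circ> \<sigma>) (PiE I (\<lambda>_. G)) (PiE I (\<lambda>_. G))"
proof (rule bij_betw_byWitness[where f' = "\<lambda>q. q \<circ> inv \<sigma>"])
  show "\<forall>q\<in>PiE I (\<lambda>_. G). q \<circ> \<sigma> \<circ> inv \<sigma> = q"
    "\<forall>q\<in>PiE I (\<lambda>_. G). q \<circ> inv \<sigma> \<circ> \<sigma> = q"
    using assms by (simp_all add: comp_assoc permutes_inv_o)
  show "(\<lambda>q. q \<circ> \<sigma>) ` PiE I (\<lambda>_. G) \<subseteq> PiE I (\<lambda>_. G)"
    by (rule image_subsetI) (rule PiE_comp_permutes[OF assms])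
  show "(\<lambda>q. q \<circ> inv \<sigma>) ` PiE I (\<lambda>_. G) \<subseteq> PiE I (\<lambda>_. G)"
    by (rule image_subsetI) (rule PiE_comp_permutes[OF permutes_inv[OF assms]])
qed

lemma card_PiE_low_score_le:
  fixes w :: "'g \<Rightarrow> 'g \<Rightarrow> real"
  assumes "finite I" "k\<^sub>0 \<in> I" "finite G"
    and "\<And>x y. w x y \<ge> 0" and "\<And>x y. w x y + w y x = 1"
  shows "real (card I) * card {q \<in> PiE I (\<lambda>_. G). 1 + score w I q k\<^sub>0 \<le> c}
           \<le> real (card G ^ card I) * max 0 (2 * c - 1)"
proof -
  let ?P = "PiE I (\<lambda>_. G)"
  let ?low = "\<lambda>k. {q \<in> ?P. 1 + score w I q k \<le> c}"
  have finite_P: "finite ?P"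
    using assms by (simp add: finite_PiE)
  have "card (?low k) = card (?low k\<^sub>0)" if "k \<in> I" for k
  proof (rule bij_betw_same_card, rule bij_betw_Collect)
    have swap: "Transposition.transpose k\<^sub>0 k permutes I"
      using assms(2) that by (rule permutes_swap_id)
    then show "bij_betw (\<lambda>q. q \<circ> Transposition.transpose k\<^sub>0 k) ?P ?P"
      by (rule bij_betw_comp_permutes_PiE)
    show "1 + score w I (q \<circ> Transposition.transpose k\<^sub>0 k) k\<^sub>0 \<le> c
        \<longleftrightarrow> 1 + score w I q k \<le> c" for q
      using swap by (simp add: score_comp_permutes)
  qed
  then have "real (card I) * card (?low k\<^sub>0) = (\<Sum>k\<in>I. real (card (?low k)))"
    by simp
  also have "\<dots> = (\<Sum>k\<in>I. \<Sum>q\<in>?P. of_bool (1 + score w I q k \<le> c))"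
    using finite_P by (simp add: Collect_conj_eq Int_commute)
  also have "\<dots> = (\<Sum>q\<in>?P. real (card {k \<in> I. 1 + score w I q k \<le> c}))"
    using \<open>finite I\<close> by (subst sum.swap) (simp add: Collect_conj_eq Int_commute)
  also have "\<dots> \<le> (\<Sum>q\<in>?P. max 0 (2 * c - 1))"
    unfolding score_def using assms by (intro sum_mono card_low_losers_tournament_le) auto
  also have "\<dots> = real (card G ^ card I) * max 0 (2 * c - 1)"
    using \<open>finite I\<close> by (simp add: card_PiE)
  finally show ?thesis .
qed

definition win_credit :: "real \<Rightarrow> real \<Rightarrow> real" where
  "win_credit a b = of_bool (a > b) + of_bool (a = b) / 2"

definition translate_draws ::
  "nat \<Rightarrow> real^'n::finite^'n \<Rightarrow> (nat \<Rightarrow> real^'n^'n) \<Rightarrow> nat \<Rightarrow> real^'n^'n" where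
  "translate_draws B Q ps i =
     (if i = 0 then matrix_inv Q else if i \<in> {1..B} then matrix_inv Q ** ps i else undefined)"

lemma bij_betw_translate_draws:
  assumes G: "perm_subgroup G"
  shows "bij_betw (\<lambda>(Q, ps). translate_draws B Q ps)
           (G \<times> PiE {1..B} (\<lambda>_. G)) (PiE {0..B} (\<lambda>_. G))"
proof (rule bij_betw_byWitness)
  let ?untranslate =
    "\<lambda>q. (matrix_inv (q 0), \<lambda>i. if i \<in> {1..B} then matrix_inv (q 0) ** q i else undefined)"
  show "\<forall>x\<in>G \<times> PiE {1..B} (\<lambda>_. G).
          ?untranslate (case x of (Q, ps) \<Rightarrow> translate_draws B Q ps) = x"
    using perm_subgroupD[OF G]
    by (auto simp: translate_draws_def PiE_iff extensional_def fun_eq_iff)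
  show "\<forall>q\<in>PiE {0..B} (\<lambda>_. G).
          (case ?untranslate q of (Q, ps) \<Rightarrow> translate_draws B Q ps) = q"
  proof
    fix q assume q: "q \<in> PiE {0..B} (\<lambda>_. G)"
    then have "q 0 \<in> G"
      by auto
    with q show "(case ?untranslate q of (Q, ps) \<Rightarrow> translate_draws B Q ps) = q"
      using perm_subgroupD(5,7)[OF G \<open>q 0 \<in> G\<close>]
      by (auto simp: translate_draws_def PiE_iff extensional_def fun_eq_iff)
  qed
  show "(\<lambda>(Q, ps). translate_draws B Q ps) ` (G \<times> PiE {1..B} (\<lambda>_. G))
          \<subseteq> PiE {0..B} (\<lambda>_. G)"
    using perm_subgroupD[OF G]
    by (auto simp: translate_draws_def PiE_iff extensional_def)
  show "?untranslate ` PiE {0..B} (\<lambda>_. G) \<subseteq> G \<times> PiE {1..B} (\<lambda>_. G)"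
    using perm_subgroupD[OF G]
    by (auto simp: PiE_iff extensional_def)
qed

lemma pval_translate_draws:
  assumes G: "perm_subgroup G" and "Q \<in> G" "ps \<in> PiE {1..B} (\<lambda>_. G)"
    and transfer: "\<And>A C. A \<in> G \<Longrightarrow> C \<in> G \<Longrightarrow> t' A C = t (matrix_inv Q ** A) (matrix_inv Q ** C)"
  shows "pval t' B ps
           = (1 + score (\<lambda>x y. win_credit (t x y) (t y x)) {0..B} (translate_draws B Q ps) 0) / (B + 1)"
proof -
  have "{0..B} - {0} = {1..B}"
    by auto
  moreover have "win_credit (t' (ps i) (mat 1)) (t' (mat 1) (ps i))
      = win_credit (t (translate_draws B Q ps i) (translate_draws B Q ps 0))
          (t (translate_draws B Q ps 0) (translate_draws B Q ps i))" if "i \<in> {1..B}" for i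
  proof -
    have "ps i \<in> G"
      using that \<open>ps \<in> _\<close> by auto
    with that show ?thesis
      by (simp add: transfer perm_subgroupD[OF G] translate_draws_def matrix_mul_rid)
  qed
  ultimately show ?thesis
    unfolding pval_def score_def win_credit_def by simp
qed

lemma sum_card_pval_le:
  assumes G: "perm_subgroup G"
    and transfer: "\<And>Q A C. Q \<in> G \<Longrightarrow> A \<in> G \<Longrightarrow> C \<in> G \<Longrightarrow>
                     t' Q A C = t (matrix_inv Q ** A) (matrix_inv Q ** C)"
  shows "real (B + 1) * (\<Sum>Q\<in>G. card {ps \<in> PiE {1..B} (\<lambda>_. G). pval (t' Q) B ps \<le> \<alpha>})
           \<le> real (card G ^ (B + 1)) * max 0 (2 * (\<alpha> * (B + 1)) - 1)"
proof -
  let ?w = "\<lambda>x y. win_credit (t x y) (t y x)"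
  let ?rejects = "\<lambda>Q. {ps \<in> PiE {1..B} (\<lambda>_. G). pval (t' Q) B ps \<le> \<alpha>}"
  have "finite G"
    using G by (rule perm_subgroupD)
  have "(\<Sum>Q\<in>G. card (?rejects Q)) = card (Sigma G ?rejects)"
    using \<open>finite G\<close> by (intro card_SigmaI[symmetric]) (auto simp: finite_PiE)
  also have "Sigma G ?rejects = {x \<in> G \<times> PiE {1..B} (\<lambda>_. G). pval (t' (fst x)) B (snd x) \<le> \<alpha>}"
    by auto
  also have "card \<dots> = card {q \<in> PiE {0..B} (\<lambda>_. G). 1 + score ?w {0..B} q 0 \<le> \<alpha> * (B + 1)}"
  proof (rule bij_betw_same_card, rule bij_betw_Collect[OF bij_betw_translate_draws[OF G]])
    fix x assume "x \<in> G \<times> PiE {1..B} (\<lambda>_. G)"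
    then show "1 + score ?w {0..B} (case x of (Q, ps) \<Rightarrow> translate_draws B Q ps) 0 \<le> \<alpha> * (B + 1)
        \<longleftrightarrow> pval (t' (fst x)) B (snd x) \<le> \<alpha>"
      using pval_translate_draws[OF G, where t = t] transfer
      by (auto simp: divide_le_eq mult.commute)
  qed
  finally have "real (B + 1) * (\<Sum>Q\<in>G. card (?rejects Q))
      = real (card {0..B}) * card {q \<in> PiE {0..B} (\<lambda>_. G). 1 + score ?w {0..B} q 0 \<le> \<alpha> * (B + 1)}"
    by simp
  also have "\<dots> \<le> real (card G ^ card {0..B}) * max 0 (2 * (\<alpha> * (B + 1)) - 1)"
    using \<open>finite G\<close> by (intro card_PiE_low_score_le) (auto simp: win_credit_def)
  finally show ?thesis
    by simp
qed

lemma emeasure_PiM_uniform_count_measure: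
  assumes "finite I" "finite G" "G \<noteq> {}" and A: "A \<subseteq> PiE I (\<lambda>_. G)"
  shows "emeasure (PiM I (\<lambda>_. uniform_count_measure G)) A = ennreal (card A / card G ^ card I)"
proof -
  interpret G: prob_space "uniform_count_measure G"
    using assms by (intro prob_space_uniform_count_measure)
  interpret product_sigma_finite "\<lambda>_. uniform_count_measure G"
    by (simp add: product_sigma_finite_def G.sigma_finite_measure_axioms)
  have "finite A"
    using A finite_subset finite_PiE[OF \<open>finite I\<close> \<open>finite G\<close>] by blast
  have singleton: "{x} = PiE I (\<lambda>i. {x i})" if "x \<in> A" for x
    using that A by (intro PiE_singleton[symmetric]) (auto simp: PiE_iff)
  have "emeasure (PiM I (\<lambda>_. uniform_count_measure G)) {x} = ennreal (1 / card G ^ card I)"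
    if "x \<in> A" for x
  proof -
    have "emeasure (PiM I (\<lambda>_. uniform_count_measure G)) {x}
        = (\<Prod>i\<in>I. emeasure (uniform_count_measure G) {x i})"
      unfolding singleton[OF that] using that A \<open>finite I\<close>
      by (intro emeasure_PiM) (auto simp: sets_uniform_count_measure PiE_iff)
    also have "\<dots> = (\<Prod>i\<in>I. ennreal (1 / card G))"
      using that A \<open>finite G\<close>
      by (intro prod.cong refl) (auto simp: emeasure_uniform_count_measure PiE_iff divide_ennreal)
    finally show ?thesis
      by (simp add: prod_ennreal ennreal_power power_one_over)
  qed
  moreover have "{x} \<in> sets (PiM I (\<lambda>_. uniform_count_measure G))" if "x \<in> A" for x
    unfolding singleton[OF that] using that A \<open>finite I\<close>
    by (intro sets_PiM_I_finite) (auto simp: sets_uniform_count_measure PiE_iff)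
  ultimately show ?thesis
    using \<open>finite A\<close>
    by (simp add: emeasure_eq_sum_singleton ennreal_of_nat_eq_real_of_nat ennreal_mult[symmetric])
qed

lemma sum_emeasure_pval_le:
  assumes G: "perm_subgroup G"
    and transfer: "\<And>Q A C. Q \<in> G \<Longrightarrow> A \<in> G \<Longrightarrow> C \<in> G \<Longrightarrow>
                     t' Q A C = t (matrix_inv Q ** A) (matrix_inv Q ** C)"
  shows "(\<Sum>Q\<in>G. emeasure (\<Pi>\<^sub>M i\<in>{1..B}. uniform_count_measure G)
                    {ps \<in> PiE {1..B} (\<lambda>_. G). pval (t' Q) B ps \<le> \<alpha>})
           \<le> of_nat (card G) * ennreal (max 0 (2 * (\<alpha> * (B + 1)) - 1) / (B + 1))"
proof -
  let ?rejects = "\<lambda>Q. {ps \<in> PiE {1..B} (\<lambda>_. G). pval (t' Q) B ps \<le> \<alpha>}"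
  have "finite G" "G \<noteq> {}"
    using perm_subgroupD(1,2)[OF G] by auto
  then have N: "real (card G) > 0"
    by (simp add: card_gt_0_iff)
  have "(\<Sum>Q\<in>G. emeasure (\<Pi>\<^sub>M i\<in>{1..B}. uniform_count_measure G) (?rejects Q))
      = ennreal ((\<Sum>Q\<in>G. real (card (?rejects Q))) / card G ^ B)"
    using \<open>finite G\<close> \<open>G \<noteq> {}\<close>
    by (simp add: emeasure_PiM_uniform_count_measure sum_divide_distrib[symmetric] sum_ennreal)
  also have "\<dots> \<le> ennreal (card G * (max 0 (2 * (\<alpha> * (B + 1)) - 1) / (B + 1)))"
    using sum_card_pval_le[where t' = t' and t = t and B = B and \<alpha> = \<alpha>, OF G transfer] N
    by (intro ennreal_leI) (simp add: field_simps)
  also have "\<dots> = of_nat (card G) * ennreal (max 0 (2 * (\<alpha> * (B + 1)) - 1) / (B + 1))"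
    by (subst ennreal_mult') (simp_all add: ennreal_of_nat_eq_real_of_nat)
  finally show ?thesis .
qed

lemma nn_integral_le_of_invariant_average:
  fixes h :: "'g \<Rightarrow> 'a \<Rightarrow> 'a" and f :: "'a \<Rightarrow> ennreal"
  assumes "prob_space \<mu>" "finite G" "G \<noteq> {}"
    and h: "\<And>g. g \<in> G \<Longrightarrow> h g \<in> measurable \<mu> \<mu>"
    and invariant: "\<And>g. g \<in> G \<Longrightarrow> distr \<mu> \<mu> (h g) = \<mu>"
    and f: "f \<in> borel_measurable \<mu>"
    and bound: "\<And>x. x \<in> space \<mu> \<Longrightarrow> (\<Sum>g\<in>G. f (h g x)) \<le> of_nat (card G) * c"
  shows "integral\<^sup>N \<mu> f \<le> c"
proof -
  have "(\<integral>\<^sup>+x. f (h g x) \<partial>\<mu>) = integral\<^sup>N \<mu> f" if "g \<in> G" for g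
    using nn_integral_distr[OF h[OF that], of f] f by (simp add: invariant[OF that])
  then have "of_nat (card G) * integral\<^sup>N \<mu> f = (\<Sum>g\<in>G. \<integral>\<^sup>+x. f (h g x) \<partial>\<mu>)"
    by simp
  also have "\<dots> = \<integral>\<^sup>+x. (\<Sum>g\<in>G. f (h g x)) \<partial>\<mu>"
    using h f by (intro nn_integral_sum[symmetric]) simp
  also have "\<dots> \<le> \<integral>\<^sup>+x. of_nat (card G) * c \<partial>\<mu>"
    by (intro nn_integral_mono bound)
  also have "\<dots> = of_nat (card G) * c"
    using prob_space.emeasure_space_1[OF \<open>prob_space \<mu>\<close>] by simp
  finally show ?thesis
    using \<open>finite G\<close> \<open>G \<noteq> {}\<close> by (simp add: ennreal_mult_le_mult_iff)
qed

lemma measure_pair_le_of_invariant_sections: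
  fixes h :: "'g \<Rightarrow> 'a \<Rightarrow> 'a"
  assumes "prob_space \<mu>" "prob_space \<nu>" "finite G" "G \<noteq> {}" "c \<ge> 0"
    and h: "\<And>g. g \<in> G \<Longrightarrow> h g \<in> measurable \<mu> \<mu>"
    and invariant: "\<And>g. g \<in> G \<Longrightarrow> distr \<mu> \<mu> (h g) = \<mu>"
    and bound: "\<And>x. x \<in> space \<mu> \<Longrightarrow>
                  (\<Sum>g\<in>G. emeasure \<nu> (Pair (h g x) -` S)) \<le> of_nat (card G) * ennreal c"
  shows "measure (\<mu> \<Otimes>\<^sub>M \<nu>) S \<le> c"
proof (cases "S \<in> sets (\<mu> \<Otimes>\<^sub>M \<nu>)")
  case True
  interpret \<mu>: prob_space \<mu> by fact
  interpret \<nu>: prob_space \<nu> by fact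
  interpret \<mu>\<nu>: pair_prob_space \<mu> \<nu> ..
  have "emeasure (\<mu> \<Otimes>\<^sub>M \<nu>) S = \<integral>\<^sup>+x. emeasure \<nu> (Pair x -` S) \<partial>\<mu>"
    by (rule \<nu>.emeasure_pair_measure_alt[OF True])
  also have "\<dots> \<le> c"
    using assms \<nu>.measurable_emeasure_Pair[OF True] by (intro nn_integral_le_of_invariant_average)
  finally have "ennreal (measure (\<mu> \<Otimes>\<^sub>M \<nu>) S) \<le> ennreal c"
    by (simp only: \<mu>\<nu>.P.emeasure_eq_measure)
  then show ?thesis
    using \<open>c \<ge> 0\<close> by simp
qed (simp add: measure_notin_sets \<open>c \<ge> 0\<close>) \<comment> \<open>a non-measurable set has measure 0\<close>

lemma borel_measurable_matrix_vector_mult: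
  "(*v) (A :: real^'n::finite^'m::finite) \<in> borel_measurable borel"
  by (intro borel_measurable_continuous_onI matrix_vector_mult_linear_continuous_on)

lemma distr_perm_mat_exchangeable:
  assumes "exchangeable M \<epsilon>" "\<epsilon> \<in> borel_measurable M" "P \<in> perm_mats"
  shows "distr (distr M borel \<epsilon>) (distr M borel \<epsilon>) ((*v) P) = distr M borel \<epsilon>"
proof -
  have "distr (distr M borel \<epsilon>) (distr M borel \<epsilon>) ((*v) P) = distr M borel ((*v) P \<circ> \<epsilon>)"
    using assms(2) borel_measurable_matrix_vector_mult
    by (subst distr_distr[symmetric]) (auto intro: distr_cong)
  then show ?thesis
    using assms(1,3) unfolding exchangeable_def comp_def by simp
qed

theorem theorem1:
  fixes M :: "'a measure"
    and \<epsilon> :: "'a \<Rightarrow> real^'n::finite"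
    and X :: "real^'n" and Z :: "real^'p::finite^'n"
    and \<beta> :: real and \<theta> :: "real^'p"
    and Y :: "'a \<Rightarrow> real^'n"
    and T :: "real^'n^'n \<Rightarrow> real^'n^'n \<Rightarrow> real^'n \<Rightarrow> real^'p^'n \<Rightarrow> real^'n \<Rightarrow> real"
    and R :: "'n set" and B :: nat and \<alpha> :: real
  assumes "prob_space M"
    and "\<epsilon> \<in> borel_measurable M"
    and "exchangeable M \<epsilon>"
    and "\<forall>\<omega>. Y \<omega> = \<beta> *\<^sub>R X + Z *v \<theta> + \<epsilon> \<omega>"
    and "\<beta> = 0"
    and "\<forall>P Q. (\<lambda>e. T P Q X Z e) \<in> borel_measurable borel"
    and "\<forall>Pi\<in>perm_mats. \<forall>Pj\<in>perm_mats. \<forall>Ps\<in>perm_mats. \<forall>e.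
           T Pi Pj X Z (Ps *v e) = T (matrix_inv Ps ** Pi) (matrix_inv Ps ** Pj) X Z e"
    and "\<alpha> > 0"
  shows "measure (distr M borel \<epsilon> \<Otimes>\<^sub>M (\<Pi>\<^sub>M i\<in>{1..B}. uniform_count_measure (perm_mats_fix R)))
           {z \<in> space (distr M borel \<epsilon> \<Otimes>\<^sub>M (\<Pi>\<^sub>M i\<in>{1..B}. uniform_count_measure (perm_mats_fix R))).
              pval (\<lambda>P Q. T P Q X Z (fst z)) B (snd z) \<le> \<alpha>} < 2 * \<alpha>"
proof -
  let ?G = "perm_mats_fix R"
  let ?\<mu> = "distr M borel \<epsilon>"
  let ?\<nu> = "\<Pi>\<^sub>M i\<in>{1..B}. uniform_count_measure ?G"
  let ?S = "{z \<in> space (?\<mu> \<Otimes>\<^sub>M ?\<nu>). pval (\<lambda>P Q. T P Q X Z (fst z)) B (snd z) \<le> \<alpha>}"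
  define c where "c = max 0 (2 * (\<alpha> * (B + 1)) - 1) / (B + 1)"
  have G: "perm_subgroup ?G"
    by (rule perm_subgroup_perm_mats_fix)
  then have "finite ?G" "?G \<noteq> {}" "?G \<subseteq> perm_mats"
    using perm_subgroupD(1,2) unfolding perm_subgroup_def by auto
  have "measure (?\<mu> \<Otimes>\<^sub>M ?\<nu>) ?S \<le> c"
  proof (rule measure_pair_le_of_invariant_sections[where G = ?G and h = "(*v)"])
    fix e :: "real^'n"
    have transfer: "T A C X Z (Q *v e) = T (matrix_inv Q ** A) (matrix_inv Q ** C) X Z e"
      if "Q \<in> ?G" "A \<in> ?G" "C \<in> ?G" for Q A C
      using that \<open>?G \<subseteq> perm_mats\<close> assms(7) by blast
    have fibre: "Pair (Q *v e) -` ?S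
        = {ps \<in> PiE {1..B} (\<lambda>_. ?G). pval (\<lambda>P Q'. T P Q' X Z (Q *v e)) B ps \<le> \<alpha>}" for Q
      by (auto simp: space_pair_measure space_PiM space_uniform_count_measure)
    show "(\<Sum>Q\<in>?G. emeasure ?\<nu> (Pair (Q *v e) -` ?S)) \<le> of_nat (card ?G) * ennreal c"
      unfolding fibre c_def
      by (rule sum_emeasure_pval_le[where t' = "\<lambda>Q P Q'. T P Q' X Z (Q *v e)", OF G transfer])
  next
    show "prob_space ?\<mu>"
      using assms(1,2) by (rule prob_space.prob_space_distr)
    show "prob_space ?\<nu>"
      using \<open>finite ?G\<close> \<open>?G \<noteq> {}\<close> by (intro prob_space_PiM prob_space_uniform_count_measure)
    show "(*v) Q \<in> measurable ?\<mu> ?\<mu>" for Q :: "real^'n^'n"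
      by (simp add: borel_measurable_matrix_vector_mult)
    show "distr ?\<mu> ?\<mu> ((*v) Q) = ?\<mu>" if "Q \<in> ?G" for Q
      using that \<open>?G \<subseteq> perm_mats\<close> assms(2,3) by (auto intro: distr_perm_mat_exchangeable)
  qed (use \<open>finite ?G\<close> \<open>?G \<noteq> {}\<close> in \<open>simp_all add: c_def\<close>)
  also have "c < 2 * \<alpha>"
    using assms(8) by (simp add: c_def field_simps add_pos_nonneg)
  finally show ?thesis .
qed

end
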